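(* Let $v=(v_n)_{n\in\mathbb{N}}\in\ell^1$ with $v_n>0$ for all $n$ and $\sum_{n=1}^\infty v_n=1$, and let $\tau_v(f)=\sum_{n=1}^\infty v_n f(1/2^{n-1})$ for $f\in C(\overline{\mathbb{N}})$. The following are equivalent: (1) $\tau_v(\varphi_n)=0$ for all $n\in\mathbb{N}$; (2) $v=(2^{-n})_{n\in\mathbb{N}}$.
   Context: $\mathbb{N}=\{1,2,\dots\}$, $\overline{\mathbb{N}}=\{1/2^{n-1}: n\in\mathbb{N}\}\cup\{0\}\subseteq\mathbb{R}$. For $n\in\mathbb{N}_0$, $\varphi_n:\overline{\mathbb{N}}\to\mathbb{R}$ is defined by $\varphi_n(x)=0$ if $x>1/2^{n-1}$, $\varphi_n(x)=-1$ if $x=1/2^{n-1}$, and $\varphi_n(x)=1$ if $x<1/2^{n-1}$. *)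

theory Defs
  imports Complex_Main
begin

definition Nbar :: "real set" where
  "Nbar = {1 / 2 ^ (n - 1) | n::nat. n \<ge> 1} \<union> {0}"

text \<open>phi n on Nbar (given by the same piecewise formula on all reals).\<close>
definition phi :: "nat \<Rightarrow> real \<Rightarrow> real" where
  "phi n x = (if x > 1 / 2 ^ (n - 1) then 0
              else if x = 1 / 2 ^ (n - 1) then -1 else 1)"

text \<open>Sequences v are indexed from 1 (the value v 0 is irrelevant).
  tau v f = sum over n >= 1 of v n * f (1/2^(n-1)).\<close>
definition tau :: "(nat \<Rightarrow> real) \<Rightarrow> (real \<Rightarrow> real) \<Rightarrow> real" where
  "tau v f = (\<Sum>n. v (Suc n) * f (1 / 2 ^ n))"

end

theory Submission
  imports Defs
begin

text \<open>Evaluated at the points of Nbar, \<open>phi (Suc j)\<close> picks out \<open>-v (Suc j)\<close> and the tail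
  after it, so \<open>tau v (phi (Suc j)) = 0\<close> says that every term of \<open>v\<close> equals the sum of all
  later terms. Hence each tail sum is half of the previous one, and with total mass 1 this
  forces \<open>v n = 1/2^n\<close>; conversely the dyadic sequence has exactly this property.\<close>

lemma phi_Suc_dyadic:
  "phi (Suc j) (1 / 2 ^ k) = (if k < j then 0 else if k = j then -1 else 1)"
proof (cases k j rule: linorder_cases)
  case less
  then have "(1::real) / 2 ^ k > 1 / 2 ^ j"
    by (simp add: divide_strict_left_mono power_strict_increasing)
  with less show ?thesis
    by (simp add: phi_def)
next
  case greater
  then have "(1::real) / 2 ^ k < 1 / 2 ^ j"
    by (simp add: divide_strict_left_mono power_strict_increasing)
  with greater show ?thesis
    by (simp add: phi_def)
qed (simp add: phi_def)

lemma suminf_shift_Suc_eq: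
  fixes a :: "nat \<Rightarrow> real"
  assumes "summable a"
  shows "(\<Sum>k. a (k + Suc j)) = (\<Sum>k. a (k + j)) - a j"
proof -
  have "summable (\<lambda>k. a (k + j))"
    using assms by (simp add: summable_iff_shift)
  from suminf_split_head[OF this] show ?thesis
    by simp
qed

lemma summable_tail_eq_term_iff:
  fixes a :: "nat \<Rightarrow> real"
  assumes "summable a"
  shows "(\<forall>j. (\<Sum>k. a (k + Suc j)) = a j) \<longleftrightarrow> (\<forall>j. a j = suminf a / 2 ^ Suc j)"
proof -
  let ?T = "\<lambda>j. \<Sum>k. a (k + j)"
  have T_Suc: "?T (Suc j) = ?T j - a j" for j
    using suminf_shift_Suc_eq[OF assms] by simp
  have T_halving: "?T j = suminf a / 2 ^ j"
    if step: "\<And>j. ?T (Suc j) = ?T j / 2" for j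
  proof (induction j)
    case 0
    then show ?case by simp
  next
    case (Suc j)
    then show ?case using step[of j] by simp
  qed
  show ?thesis
  proof
    assume tail_eq: "\<forall>j. ?T (Suc j) = a j"
    then have "?T (Suc j) = ?T j / 2" for j
      using T_Suc[of j] by simp
    then show "\<forall>j. a j = suminf a / 2 ^ Suc j"
      using tail_eq T_halving by (metis Suc_eq_plus1)
  next
    assume dyadic: "\<forall>j. a j = suminf a / 2 ^ Suc j"
    have tails: "?T j = suminf a / 2 ^ j" for j
    proof (induction j)
      case 0
      then show ?case by simp
    next
      case (Suc j)
      then show ?case using T_Suc[of j] dyadic[rule_format, of j] by simp
    qed
    show "\<forall>j. ?T (Suc j) = a j"
      using tails dyadic by metis
  qed
qed

lemma tau_phi_Suc:
  assumes "summable (\<lambda>n. v (Suc n))"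
  shows "tau v (phi (Suc j)) = (\<Sum>k. v (Suc (k + Suc j))) - v (Suc j)"
proof -
  define f where "f k = v (Suc k) * phi (Suc j) (1 / 2 ^ k)" for k
  have f_eq: "f k = (if k < j then 0 else if k = j then - v (Suc j) else v (Suc k))" for k
    by (simp add: f_def phi_Suc_dyadic)
  have f_tail: "(\<lambda>k. f (k + Suc j)) = (\<lambda>k. v (Suc (k + Suc j)))"
    by (auto simp: f_eq)
  have "summable (\<lambda>k. f (k + Suc j))"
    unfolding f_tail using assms summable_iff_shift[of "\<lambda>n. v (Suc n)" "Suc j"] by simp
  then have "summable f"
    by (rule summable_iff_shift[THEN iffD1])
  then have "suminf f = (\<Sum>k. f (k + Suc j)) + (\<Sum>i<Suc j. f i)"
    by (rule suminf_split_initial_segment)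
  also have "(\<Sum>i<Suc j. f i) = - v (Suc j)"
    by (simp add: f_eq)
  finally show ?thesis
    using f_tail by (simp add: tau_def f_def[symmetric])
qed

lemma all_ge_1_iff_all_Suc: "(\<forall>n\<ge>1. P n) \<longleftrightarrow> (\<forall>j. P (Suc j))"
  by (auto dest: Suc_le_D)

theorem proposition3p5:
  fixes v :: "nat \<Rightarrow> real"
  assumes pos: "\<And>n. n \<ge> 1 \<Longrightarrow> v n > 0"
    and l1: "summable (\<lambda>n. v (Suc n))"
    and sum1: "(\<Sum>n. v (Suc n)) = 1"
  shows "(\<forall>n\<ge>1. tau v (phi n) = 0) \<longleftrightarrow> (\<forall>n\<ge>1. v n = 1 / 2 ^ n)"
proof -
  have "(\<forall>n\<ge>1. tau v (phi n) = 0) \<longleftrightarrow> (\<forall>j. (\<Sum>k. v (Suc (k + Suc j))) = v (Suc j))"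
    unfolding all_ge_1_iff_all_Suc tau_phi_Suc[OF l1] by auto
  also have "\<dots> \<longleftrightarrow> (\<forall>j. v (Suc j) = 1 / 2 ^ Suc j)"
    using summable_tail_eq_term_iff[OF l1] sum1 by simp
  also have "\<dots> \<longleftrightarrow> (\<forall>n\<ge>1. v n = 1 / 2 ^ n)"
    unfolding all_ge_1_iff_all_Suc ..
  finally show ?thesis .
qed

end
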